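(* Let $\Gamma=\mathbb Q_{>0}$ be the multiplicative group of positive rationals, acting on the additive group $\mathbb Q$ (discrete) by $\widehat\rho(\gamma)(x)=\gamma x$, and let $\rho$ be the dual action of $\Gamma$ on the compact group $\widehat{\mathbb Q}$, i.e. $\rho(\gamma)(g)(x)=g(\gamma x)$ for $g\in\widehat{\mathbb Q}$, $x\in\mathbb Q$. Then $(\widehat{\mathbb Q},\rho)$ is expansive, but for no finitely generated subgroup $\Gamma_0\subset\Gamma$ is the restriction of $\rho$ to $\Gamma_0$ expansive.
   Context: $\widehat{\mathbb Q}$ is the Pontryagin dual of the discrete group $\mathbb Q$ (a one-dimensional solenoid). An action $\rho$ of $\Gamma$ on a metrizable topological group $X$ by continuous endomorphisms is expansive if there is a neighborhood $U$ of the identity with $\bigcap_{\gamma\in\Gamma}\rho(\gamma)^{-1}(U)=\{e\}$. *)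

theory Defs
  imports "HOL-Analysis.Analysis"
begin

text \<open>The Pontryagin dual of the discrete group (rat,+): characters into the unit circle
  of the complex plane, with the topology of pointwise convergence (= compact-open topology,
  since rat is discrete), i.e. the subspace topology of the product topology on rat => complex.\<close>
definition rat_dual :: "(rat \<Rightarrow> complex) set" where
  "rat_dual = {g. (\<forall>x y. g (x + y) = g x * g y) \<and> (\<forall>x. norm (g x) = 1)}"

definition rho :: "rat \<Rightarrow> (rat \<Rightarrow> complex) \<Rightarrow> (rat \<Rightarrow> complex)" where
  "rho \<gamma> g = (\<lambda>x. g (\<gamma> * x))"

definition expansive :: "'g set \<Rightarrow> ('g \<Rightarrow> 'x \<Rightarrow> 'x) \<Rightarrow> 'x::topological_space set \<Rightarrow> 'x \<Rightarrow> bool" where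
  "expansive G act X e \<longleftrightarrow>
     (\<exists>U. U \<subseteq> X \<and> (\<exists>V. open V \<and> e \<in> V \<and> V \<inter> X \<subseteq> U) \<and>
          (\<Inter>\<gamma>\<in>G. {x \<in> X. act \<gamma> x \<in> U}) = {e})"

definition pos_rat_subgroup :: "rat set \<Rightarrow> bool" where
  "pos_rat_subgroup H \<longleftrightarrow> H \<subseteq> {q. q > 0} \<and> 1 \<in> H \<and>
     (\<forall>a\<in>H. \<forall>b\<in>H. a * b \<in> H) \<and> (\<forall>a\<in>H. inverse a \<in> H)"

definition fg_pos_rat_subgroup :: "rat set \<Rightarrow> bool" where
  "fg_pos_rat_subgroup H \<longleftrightarrow> pos_rat_subgroup H \<and>
     (\<exists>S. finite S \<and> S \<subseteq> H \<and> (\<forall>K. pos_rat_subgroup K \<and> S \<subseteq> K \<longrightarrow> H \<subseteq> K))"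

end

theory Submission
  imports Defs "HOL-Computational_Algebra.Primes"
begin

text \<open>Expansiveness of the full action is witnessed by \<open>U = {g. Re (g 1) > 0}\<close>: if all
  translates of g lie in U, then for \<open>x > 0\<close> every power \<open>g x ^ n = g (n * x)\<close> has positive
  real part, which forces the unit complex number \<open>g x\<close> to be 1.

  A finitely generated subgroup of \<open>\<rat>\<^sub>>\<^sub>0\<close> consists of units of the local ring
  \<open>\<int>\<^sub>(\<^sub>p\<^sub>)\<close> for every prime p exceeding the numerators and denominators of its
  generators. A neighbourhood of the trivial character only constrains the values on a finite
  set F, and \<open>p\<^sup>k * F \<subseteq> \<int>\<^sub>(\<^sub>p\<^sub>)\<close> for large k. Composing the character of
  \<open>\<rat>/\<int>\<^sub>(\<^sub>p\<^sub>) \<cong> \<int>[1/p]/\<int>\<close> with multiplication by \<open>p\<^sup>k\<close> gives a nontrivial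
  character all of whose translates under the subgroup are trivial on F.\<close>

definition p_integral :: "int \<Rightarrow> rat set" where
  "p_integral p = {q. \<exists>a b. b \<noteq> 0 \<and> \<not> p dvd b \<and> q = of_int a / of_int b}"

definition p_power_denom :: "int \<Rightarrow> rat set" where
  "p_power_denom p = {q. \<exists>k n. q = of_int k / of_int p ^ n}"

lemma p_integral_fraction:
  assumes "prime p" "b \<noteq> 0" "\<bar>b\<bar> < p"
  shows "of_int a / of_int b \<in> p_integral p"
proof -
  have "\<not> p dvd b"
    using assms zdvd_imp_le[of p "\<bar>b\<bar>"] by auto
  then show ?thesis
    unfolding p_integral_def using assms(2) by blast
qed

lemma p_integral_of_int: "prime p \<Longrightarrow> of_int m \<in> p_integral p"
  using p_integral_fraction[of p 1 m] prime_gt_1_int by simp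

lemma p_integral_add:
  assumes "prime p" "x \<in> p_integral p" "y \<in> p_integral p"
  shows "x + y \<in> p_integral p"
proof -
  obtain a b c d where x: "b \<noteq> 0" "\<not> p dvd b" "x = of_int a / of_int b"
    and y: "d \<noteq> 0" "\<not> p dvd d" "y = of_int c / of_int d"
    using assms unfolding p_integral_def by auto
  have "x + y = of_int (a * d + c * b) / of_int (b * d)"
    using x y by (simp add: field_simps)
  moreover have "\<not> p dvd b * d"
    using x y assms(1) prime_dvd_mult_iff by blast
  ultimately show ?thesis
    unfolding p_integral_def using x(1) y(1)
    by (intro CollectI exI[of _ "a * d + c * b"] exI[of _ "b * d"]) simp
qed

lemma p_integral_mult:
  assumes "prime p" "x \<in> p_integral p" "y \<in> p_integral p"
  shows "x * y \<in> p_integral p"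
proof -
  obtain a b c d where x: "b \<noteq> 0" "\<not> p dvd b" "x = of_int a / of_int b"
    and y: "d \<noteq> 0" "\<not> p dvd d" "y = of_int c / of_int d"
    using assms unfolding p_integral_def by auto
  have "x * y = of_int (a * c) / of_int (b * d)"
    using x y by simp
  moreover have "\<not> p dvd b * d"
    using x y assms(1) prime_dvd_mult_iff by blast
  ultimately show ?thesis
    unfolding p_integral_def using x(1) y(1)
    by (intro CollectI exI[of _ "a * c"] exI[of _ "b * d"]) simp
qed

lemma p_integral_diff:
  assumes "prime p" "x \<in> p_integral p" "y \<in> p_integral p"
  shows "x - y \<in> p_integral p"
proof -
  obtain a b where "b \<noteq> 0" "\<not> p dvd b" "y = of_int a / of_int b"
    using assms(3) unfolding p_integral_def by auto
  then have "- y \<in> p_integral p"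
    unfolding p_integral_def by (intro CollectI exI[of _ "- a"] exI[of _ b]) simp
  from p_integral_add[OF assms(1,2) this] show ?thesis
    by simp
qed

lemma p_power_denom_add_diff:
  assumes "prime p" "x \<in> p_power_denom p" "y \<in> p_power_denom p"
  shows "x + y \<in> p_power_denom p" "x - y \<in> p_power_denom p"
proof -
  obtain k n k' n' where x: "x = of_int k / of_int p ^ n" and y: "y = of_int k' / of_int p ^ n'"
    using assms unfolding p_power_denom_def by auto
  have p0: "(of_int p :: rat) \<noteq> 0"
    using assms by auto
  have "x + y = of_int (k * p ^ n' + k' * p ^ n) / of_int p ^ (n + n')"
       "x - y = of_int (k * p ^ n' - k' * p ^ n) / of_int p ^ (n + n')"
    unfolding x y using p0 by (simp_all add: field_simps power_add)
  then show "x + y \<in> p_power_denom p" "x - y \<in> p_power_denom p"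
    unfolding p_power_denom_def by blast+
qed

lemma p_integral_inter_p_power_denom:
  assumes "prime p" "x \<in> p_integral p" "x \<in> p_power_denom p"
  shows "x \<in> \<int>"
proof -
  obtain a b where x: "b \<noteq> 0" "\<not> p dvd b" "x = of_int a / of_int b"
    using assms unfolding p_integral_def by auto
  obtain k n where x': "x = of_int k / of_int p ^ n"
    using assms unfolding p_power_denom_def by auto
  have p0: "(of_int p :: rat) \<noteq> 0"
    using assms by auto
  have "of_int (k * b) = (of_int (a * p ^ n) :: rat)"
    using x x' p0 by (simp add: field_simps)
  then have "p ^ n dvd k * b"
    by (metis dvd_triv_right of_int_eq_iff)
  moreover have "coprime (p ^ n) b"
    using x(2) assms(1) by (simp add: prime_imp_coprime)
  ultimately obtain m where "k = p ^ n * m"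
    using coprime_dvd_mult_left_iff by blast
  then show ?thesis
    using x' p0 by simp
qed

lemma rat_decompose_p_power_denom_p_integral:
  assumes "prime p"
  obtains r where "r \<in> p_power_denom p" "x - r \<in> p_integral p"
proof -
  obtain a b where ab: "quotient_of x = (a, b)"
    by (cases "quotient_of x")
  have b0: "b > 0" and xab: "x = of_int a / of_int b"
    using ab quotient_of_denom_pos quotient_of_div by blast+
  have "\<not> is_unit p"
    using assms not_prime_unit by blast
  then obtain c where c: "b = p ^ multiplicity p b * c" "\<not> p dvd c"
    using multiplicity_decompose'[of b p] b0 by auto
  define m where "m = multiplicity p b"
  have "coprime c (p ^ m)"
    using prime_imp_coprime[OF assms c(2)] by (simp add: coprime_commute)
  then obtain u v where uv: "u * c + v * p ^ m = 1"
    using bezout_int[of c "p ^ m"] by auto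
  have c0: "(of_int c :: rat) \<noteq> 0" and pm0: "(of_int p :: rat) ^ m \<noteq> 0"
    using c b0 assms by auto
  have uv': "of_int u * of_int c + of_int v * of_int p ^ m = (1 :: rat)"
    using arg_cong[OF uv, of "of_int :: int \<Rightarrow> rat"] by simp
  have "(of_int b :: rat) = of_int p ^ m * of_int c"
    using arg_cong[OF c(1), of "of_int :: int \<Rightarrow> rat"] by (simp add: m_def)
  then have "x = of_int a * (of_int u * of_int c + of_int v * of_int p ^ m) / (of_int p ^ m * of_int c)"
    unfolding xab uv' by simp
  then have "x = of_int (a * u) / of_int p ^ m + of_int (a * v) / of_int c"
    using c0 pm0 by (simp add: field_simps)
  moreover have "of_int (a * u) / of_int p ^ m \<in> p_power_denom p"
    unfolding p_power_denom_def by blast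
  moreover have "of_int (a * v) / of_int c \<in> p_integral p"
    unfolding p_integral_def using c b0 by (intro CollectI exI[of _ "a * v"] exI[of _ c]) auto
  ultimately show ?thesis
    using that by (metis add_diff_cancel_left')
qed

lemma finite_p_power_multiples_p_integral:
  assumes "prime p" "finite F"
  shows "\<exists>k. \<forall>x\<in>F. of_int p ^ k * x \<in> p_integral p"
  using assms(2)
proof (induction F rule: finite_induct)
  case empty
  show ?case by simp
next
  case (insert x F)
  then obtain k where k: "\<forall>y\<in>F. of_int p ^ k * y \<in> p_integral p"
    by blast
  obtain r where r: "r \<in> p_power_denom p" "x - r \<in> p_integral p"
    using rat_decompose_p_power_denom_p_integral[OF assms(1)] .
  obtain a n where rn: "r = of_int a / of_int p ^ n"
    using r(1) unfolding p_power_denom_def by blast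
  have p0: "(of_int p :: rat) \<noteq> 0"
    using assms by auto
  have pow: "of_int p ^ j \<in> p_integral p" for j
    using p_integral_of_int[OF assms(1), of "p ^ j"] by simp
  have "of_int p ^ n * x = of_int p ^ n * (x - r) + of_int a"
    using rn p0 by (simp add: field_simps)
  then have px: "of_int p ^ n * x \<in> p_integral p"
    using p_integral_add p_integral_mult p_integral_of_int assms(1) pow r(2) by metis
  have "of_int p ^ (k + n) * x = of_int p ^ k * (of_int p ^ n * x)"
    by (simp add: power_add ac_simps)
  with p_integral_mult[OF assms(1) pow[of k] px] have "of_int p ^ (k + n) * x \<in> p_integral p"
    by (simp only:)
  moreover have "of_int p ^ (k + n) * y \<in> p_integral p" if "y \<in> F" for y
  proof -
    have "of_int p ^ (k + n) * y = of_int p ^ n * (of_int p ^ k * y)"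
      by (simp add: power_add ac_simps)
    with p_integral_mult[OF assms(1) pow[of n]] that k show ?thesis
      by (simp only:)
  qed
  ultimately show ?case
    by blast
qed

lemma cis_2pi_eq_1_iff: "cis (2 * pi * t) = 1 \<longleftrightarrow> t \<in> \<int>"
proof
  assume "cis (2 * pi * t) = 1"
  then obtain n :: int where "2 * pi * t = of_int (2 * n) * pi"
    unfolding cis_conv_exp exp_eq_1 by auto
  then have "t = of_int n"
    by simp
  then show "t \<in> \<int>"
    by simp
qed (rule cis_multiple_2pi)

text \<open>The \<open>SOME\<close> picks a \<open>\<int>[1/p]\<close>-component of x; it is unique up to an integer,
  which \<open>cis (2 * pi * _)\<close> does not see.\<close>

definition p_adic_char :: "int \<Rightarrow> rat \<Rightarrow> complex" where
  "p_adic_char p x =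
     cis (2 * pi * of_rat (SOME r. r \<in> p_power_denom p \<and> x - r \<in> p_integral p))"

lemma p_adic_char_eq:
  assumes "prime p" "r \<in> p_power_denom p" "x - r \<in> p_integral p"
  shows "p_adic_char p x = cis (2 * pi * of_rat r)"
proof -
  define s where "s = (SOME r. r \<in> p_power_denom p \<and> x - r \<in> p_integral p)"
  have s: "s \<in> p_power_denom p" "x - s \<in> p_integral p"
    using someI_ex[of "\<lambda>r. r \<in> p_power_denom p \<and> x - r \<in> p_integral p"]
      rat_decompose_p_power_denom_p_integral[OF assms(1), of x]
    unfolding s_def by blast+
  have "s - r = (x - r) - (x - s)"
    by simp
  then have "s - r \<in> p_integral p"
    using p_integral_diff[OF assms(1) assms(3) s(2)] by simp
  moreover have "s - r \<in> p_power_denom p"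
    using p_power_denom_add_diff(2)[OF assms(1) s(1) assms(2)] .
  ultimately obtain m where "s - r = of_int m"
    using p_integral_inter_p_power_denom[OF assms(1)] Ints_cases by metis
  then have "of_rat s = of_rat r + (of_int m :: real)"
    by (metis add_diff_cancel_left' diff_add_cancel of_rat_add of_rat_of_int_eq)
  then have "cis (2 * pi * of_rat s) = cis (2 * pi * of_rat r)"
    by (simp add: distrib_left flip: cis_mult)
  then show ?thesis
    unfolding p_adic_char_def s_def[symmetric] by simp
qed

lemma p_adic_char_add:
  assumes "prime p"
  shows "p_adic_char p (x + y) = p_adic_char p x * p_adic_char p y"
proof -
  obtain r s where r: "r \<in> p_power_denom p" "x - r \<in> p_integral p"
    and s: "s \<in> p_power_denom p" "y - s \<in> p_integral p"
    using rat_decompose_p_power_denom_p_integral[OF assms] by metis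
  have "(x + y) - (r + s) = (x - r) + (y - s)"
    by simp
  then have "(x + y) - (r + s) \<in> p_integral p"
    using p_integral_add[OF assms r(2) s(2)] by (simp only:)
  then have "p_adic_char p (x + y) = cis (2 * pi * of_rat (r + s))"
    using p_adic_char_eq[OF assms p_power_denom_add_diff(1)[OF assms r(1) s(1)]] by blast
  then show ?thesis
    using p_adic_char_eq[OF assms r] p_adic_char_eq[OF assms s]
    by (simp add: of_rat_add distrib_left cis_mult)
qed

lemma p_adic_char_p_integral:
  assumes "prime p" "x \<in> p_integral p"
  shows "p_adic_char p x = 1"
proof -
  have "0 \<in> p_power_denom p"
    unfolding p_power_denom_def by (intro CollectI exI[of _ 0] exI[of _ 0]) simp
  then show ?thesis
    using p_adic_char_eq[OF assms(1)] assms(2) by fastforce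
qed

lemma p_adic_char_inverse_prime:
  assumes "prime p"
  shows "p_adic_char p (1 / of_int p) \<noteq> 1"
proof
  assume char_1: "p_adic_char p (1 / of_int p) = 1"
  have "1 / of_int p \<in> p_power_denom p"
    unfolding p_power_denom_def by (intro CollectI exI[of _ 1] exI[of _ 1]) simp
  moreover have "1 / of_int p - 1 / of_int p \<in> p_integral p"
    using p_integral_of_int[OF assms, of 0] by simp
  ultimately have "cis (2 * pi * of_rat (1 / of_int p)) = 1"
    using p_adic_char_eq[OF assms] char_1 by metis
  then obtain n where "of_rat (1 / of_int p) = (of_int n :: real)"
    unfolding cis_2pi_eq_1_iff by (auto elim: Ints_cases)
  then have "(1 / of_int p :: rat) = of_int n"
    by (metis of_rat_eq_iff of_rat_of_int_eq)
  then have "p * n = 1"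
    using prime_gt_0_int[OF assms] by (simp add: field_simps flip: of_int_mult of_int_eq_iff)
  then show False
    using assms not_prime_unit dvd_triv_left by metis
qed

lemma p_adic_char_scaled_in_rat_dual:
  assumes "prime p"
  shows "(\<lambda>x. p_adic_char p (c * x)) \<in> rat_dual"
  unfolding rat_dual_def p_adic_char_def[of p]
  by (simp add: distrib_left p_adic_char_add[OF assms, unfolded p_adic_char_def])

lemma exists_nontrivial_char_trivial_on_p_integral_multiples:
  assumes "prime p" "finite F"
  obtains g where "g \<in> rat_dual" "g \<noteq> (\<lambda>_. 1)" "\<forall>\<gamma>\<in>p_integral p. \<forall>x\<in>F. g (\<gamma> * x) = 1"
proof -
  obtain k where k: "\<And>x. x \<in> F \<Longrightarrow> of_int p ^ k * x \<in> p_integral p"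
    using finite_p_power_multiples_p_integral[OF assms] by blast
  define g where "g x = p_adic_char p (of_int p ^ k * x)" for x
  have "g \<in> rat_dual"
    unfolding g_def using p_adic_char_scaled_in_rat_dual[OF assms(1)] .
  moreover have "of_int p ^ k * (1 / of_int p ^ Suc k) = (1 / of_int p :: rat)"
    using assms(1) by simp
  then have "g \<noteq> (\<lambda>_. 1)"
    unfolding g_def using p_adic_char_inverse_prime[OF assms(1)] by metis
  moreover have "g (\<gamma> * x) = 1" if "\<gamma> \<in> p_integral p" "x \<in> F" for \<gamma> x
  proof -
    have "\<gamma> * (of_int p ^ k * x) \<in> p_integral p"
      using p_integral_mult[OF assms(1)] k that by blast
    then show ?thesis
      unfolding g_def using p_adic_char_p_integral[OF assms(1)] by (simp add: ac_simps)
  qed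
  ultimately show thesis
    using that by blast
qed

lemma rat_dual_zero:
  assumes "g \<in> rat_dual"
  shows "g 0 = 1"
proof -
  have "g (0 + 0) = g 0 * g 0" and "norm (g 0) = 1"
    using assms unfolding rat_dual_def by blast+
  then have "g 0 = g 0 * g 0" and "g 0 \<noteq> 0"
    by auto
  then show ?thesis
    by simp
qed

lemma rat_dual_of_nat_mult:
  assumes "g \<in> rat_dual"
  shows "g (of_nat n * x) = g x ^ n"
proof (induction n)
  case 0
  show ?case
    using rat_dual_zero[OF assms] by simp
next
  case (Suc n)
  have "g (of_nat (Suc n) * x) = g (of_nat n * x) * g x"
    using assms unfolding rat_dual_def by (simp add: distrib_right)
  then show ?case
    using Suc by simp
qed

lemma rho_in_rat_dual: "g \<in> rat_dual \<Longrightarrow> rho \<gamma> g \<in> rat_dual"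
  unfolding rat_dual_def rho_def by (simp add: distrib_left)

lemma unit_eq_1_if_Re_powers_pos:
  fixes z :: complex
  assumes "norm z = 1" "\<And>n. n \<ge> 1 \<Longrightarrow> Re (z ^ n) > 0"
  shows "z = 1"
proof (rule ccontr)
  assume "z \<noteq> 1"
  define \<theta> where "\<theta> = Arg z"
  have "z \<noteq> 0"
    using assms(1) by auto
  then have z: "z = cis \<theta>"
    unfolding \<theta>_def using cis_Arg assms(1) by (simp add: sgn_div_norm)
  define t where "t = \<bar>\<theta>\<bar>"
  have t: "0 < t" "t \<le> pi"
    using \<open>z \<noteq> 1\<close> z Arg_bounded[of z] unfolding t_def \<theta>_def by auto
  \<comment> \<open>The first multiple of t reaching \<open>pi/2\<close> lies in \<open>[pi/2, 3 pi/2]\<close>, where cos is not positive.\<close>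
  define n where "n = nat \<lceil>pi / (2 * t)\<rceil>"
  have "pi / (2 * t) > 0"
    using t by simp
  then have n: "n \<ge> 1" "pi / (2 * t) \<le> real n" "real n < pi / (2 * t) + 1"
    unfolding n_def by linarith+
  then have "pi / 2 \<le> real n * t" "real n * t < pi / 2 + t"
    using t by (simp_all add: field_simps)
  then have "cos (real n * t - pi) \<ge> 0"
    using t by (intro cos_ge_zero) auto
  moreover have "Re (z ^ n) = cos (real n * \<theta>)"
    unfolding z by (rule cos_n_Re_cis_pow_n[symmetric])
  moreover have "cos (real n * \<theta>) = cos (real n * t)"
    unfolding t_def by (cases "\<theta> \<ge> 0") auto
  ultimately show False
    using assms(2)[OF n(1)] by simp
qed

lemma rat_dual_eq_1_if_Re_pos:
  assumes g: "g \<in> rat_dual" and pos: "\<And>\<gamma>. \<gamma> > 0 \<Longrightarrow> Re (g \<gamma>) > 0"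
  shows "g = (\<lambda>_. 1)"
proof -
  have pos_1: "g x = 1" if "x > 0" for x
  proof (rule unit_eq_1_if_Re_powers_pos)
    show "norm (g x) = 1"
      using g unfolding rat_dual_def by blast
    fix n :: nat
    assume "n \<ge> 1"
    then show "Re (g x ^ n) > 0"
      using pos[of "of_nat n * x"] rat_dual_of_nat_mult[OF g] that by simp
  qed
  have "g x = 1" for x
  proof (cases "x > 0")
    case False
    have "g (x + - x) = g x * g (- x)"
      using g unfolding rat_dual_def by blast
    then have "g x * g (- x) = 1"
      using rat_dual_zero[OF g] by simp
    moreover have "x = 0 \<or> g (- x) = 1"
      using False pos_1[of "- x"] by (cases "x < 0") auto
    ultimately show ?thesis
      using rat_dual_zero[OF g] by auto
  qed (rule pos_1)
  then show ?thesis
    by blast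
qed

lemma expansiveI:
  assumes "open V" "e \<in> V" "(\<Inter>\<gamma>\<in>G. {x \<in> X. act \<gamma> x \<in> V \<inter> X}) = {e}"
  shows "expansive G act X e"
  unfolding expansive_def by (rule exI[of _ "V \<inter> X"]) (use assms in blast)

lemma expansive_pos_rats: "expansive {q::rat. q > 0} rho rat_dual (\<lambda>_. 1)"
proof -
  define V where "V = (\<lambda>f :: rat \<Rightarrow> complex. f 1) -` {z. Re z > 0}"
  have open_V: "open V"
    unfolding V_def
    by (intro open_vimage open_halfspace_Re_gt continuous_on_product_coordinates)
  have one_V: "(\<lambda>_. 1) \<in> V"
    unfolding V_def by simp
  have one: "(\<lambda>_. 1) \<in> rat_dual"
    unfolding rat_dual_def by simp
  have "(\<Inter>\<gamma>\<in>{q. q > 0}. {x \<in> rat_dual. rho \<gamma> x \<in> V \<inter> rat_dual}) = {\<lambda>_. 1}"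
  proof (intro equalityI subsetI)
    fix g
    assume g: "g \<in> (\<Inter>\<gamma>\<in>{q. q > 0}. {x \<in> rat_dual. rho \<gamma> x \<in> V \<inter> rat_dual})"
    have "g = (\<lambda>_. 1)"
    proof (rule rat_dual_eq_1_if_Re_pos)
      have "g \<in> {x \<in> rat_dual. rho 1 x \<in> V \<inter> rat_dual}"
        using g by (rule INT_D) simp
      then show "g \<in> rat_dual"
        by blast
      show "Re (g \<gamma>) > 0" if "\<gamma> > 0" for \<gamma>
      proof -
        have "g \<in> {x \<in> rat_dual. rho \<gamma> x \<in> V \<inter> rat_dual}"
          using g by (rule INT_D) (simp add: that)
        then show ?thesis
          unfolding V_def rho_def by simp
      qed
    qed
    then show "g \<in> {\<lambda>_. 1}"
      by simp
  next
    fix g :: "rat \<Rightarrow> complex"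
    assume "g \<in> {\<lambda>_. 1}"
    then show "g \<in> (\<Inter>\<gamma>\<in>{q. q > 0}. {x \<in> rat_dual. rho \<gamma> x \<in> V \<inter> rat_dual})"
      using one unfolding V_def rho_def by simp
  qed
  then show ?thesis
    by (rule expansiveI[OF open_V one_V])
qed

lemma open_fun_contains_cylinder:
  fixes V :: "('a \<Rightarrow> 'b::topological_space) set"
  assumes "open V" "e \<in> V"
  obtains F where "finite F" "\<And>f. (\<And>x. x \<in> F \<Longrightarrow> f x = e x) \<Longrightarrow> f \<in> V"
proof -
  have "openin (product_topology (\<lambda>_. euclidean) UNIV) V"
    using assms(1) open_fun_def by metis
  from product_topology_open_contains_basis[OF this assms(2)]
  obtain B where B: "e \<in> (\<Pi>\<^sub>E i\<in>UNIV. B i)" "finite {i. B i \<noteq> UNIV}" "(\<Pi>\<^sub>E i\<in>UNIV. B i) \<subseteq> V"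
    by auto
  have "f \<in> V" if "\<And>x. x \<in> {i. B i \<noteq> UNIV} \<Longrightarrow> f x = e x" for f
  proof -
    have "f i \<in> B i" for i
      using that B(1) by (cases "B i = UNIV") (auto simp: PiE_iff)
    then show ?thesis
      using B(3) by (auto simp: PiE_iff)
  qed
  with B(2) show thesis
    using that by blast
qed

lemma pos_rat_subgroup_p_units:
  assumes "prime p"
  shows "pos_rat_subgroup {q. q > 0 \<and> q \<in> p_integral p \<and> inverse q \<in> p_integral p}"
  unfolding pos_rat_subgroup_def
  using p_integral_of_int[OF assms, of 1] p_integral_mult[OF assms]
  by (auto simp: inverse_mult_distrib)

lemma fg_pos_rat_subgroup_subset_p_integral:
  assumes "fg_pos_rat_subgroup H"
  obtains p where "prime p" "H \<subseteq> p_integral p"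
proof -
  have H_pos: "H \<subseteq> {q. q > 0}"
    using assms unfolding fg_pos_rat_subgroup_def pos_rat_subgroup_def by blast
  obtain S where S: "finite S" "S \<subseteq> H" "\<forall>K. pos_rat_subgroup K \<and> S \<subseteq> K \<longrightarrow> H \<subseteq> K"
    using assms unfolding fg_pos_rat_subgroup_def by (elim conjE exE) (rule that)
  define N where "N = (\<Sum>s\<in>S. nat \<bar>fst (quotient_of s)\<bar> + nat (snd (quotient_of s)))"
  obtain p0 :: nat where "prime p0" "p0 > N"
    using bigger_prime by blast
  define p where "p = int p0"
  have p: "prime p" "int N < p"
    unfolding p_def using \<open>prime p0\<close> \<open>p0 > N\<close> by simp_all
  let ?K = "{q. q > 0 \<and> q \<in> p_integral p \<and> inverse q \<in> p_integral p}"
  have "S \<subseteq> ?K"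
  proof
    fix s
    assume "s \<in> S"
    obtain a b where ab: "quotient_of s = (a, b)"
      by (cases "quotient_of s")
    have b: "b > 0" and s: "s = of_int a / of_int b"
      using ab quotient_of_denom_pos quotient_of_div by blast+
    have "s > 0"
      using \<open>s \<in> S\<close> S(2) H_pos by blast
    then have "a > 0"
      using b unfolding s by (simp add: zero_less_divide_iff)
    have "nat \<bar>a\<bar> + nat b \<le> N"
      unfolding N_def
      using member_le_sum[of s S "\<lambda>s. nat \<bar>fst (quotient_of s)\<bar> + nat (snd (quotient_of s))"]
        \<open>s \<in> S\<close> S(1) ab
      by simp
    then have "a < p" "b < p"
      using p(2) \<open>a > 0\<close> b by linarith+
    then have "s \<in> p_integral p" and "inverse s \<in> p_integral p"
      using p_integral_fraction[OF p(1), of b a] p_integral_fraction[OF p(1), of a b]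
        \<open>a > 0\<close> b unfolding s by simp_all
    with \<open>s > 0\<close> show "s \<in> ?K"
      by blast
  qed
  then have "H \<subseteq> ?K"
    using S(3) pos_rat_subgroup_p_units[OF p(1)] by blast
  then show thesis
    using that p(1) by blast
qed

lemma not_expansive_fg_pos_rat_subgroup:
  assumes "fg_pos_rat_subgroup H"
  shows "\<not> expansive H rho rat_dual (\<lambda>_. 1)"
proof
  assume "expansive H rho rat_dual (\<lambda>_. 1)"
  then obtain U V where U: "(\<Inter>\<gamma>\<in>H. {x \<in> rat_dual. rho \<gamma> x \<in> U}) = {\<lambda>_. 1}"
    and V: "open V" "(\<lambda>_. 1) \<in> V" "V \<inter> rat_dual \<subseteq> U"
    unfolding expansive_def by (elim exE conjE) (rule that)
  obtain F where F: "finite F" "\<And>f. (\<And>x. x \<in> F \<Longrightarrow> f x = 1) \<Longrightarrow> f \<in> V"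
    using open_fun_contains_cylinder[OF V(1,2)] by metis
  obtain p where p: "prime p" "H \<subseteq> p_integral p"
    using fg_pos_rat_subgroup_subset_p_integral[OF assms] .
  obtain g where g: "g \<in> rat_dual" "g \<noteq> (\<lambda>_. 1)"
    and g_trivial: "\<forall>\<gamma>\<in>p_integral p. \<forall>x\<in>F. g (\<gamma> * x) = 1"
    using exists_nontrivial_char_trivial_on_p_integral_multiples[OF p(1) F(1)] .
  have "rho \<gamma> g \<in> U" if "\<gamma> \<in> H" for \<gamma>
  proof -
    have "rho \<gamma> g \<in> V"
    proof (rule F(2))
      fix x
      assume "x \<in> F"
      then show "rho \<gamma> g x = 1"
        unfolding rho_def using g_trivial that p(2) by blast
    qed
    then show ?thesis
      using V(3) rho_in_rat_dual[OF g(1)] by blast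
  qed
  then have "g \<in> (\<Inter>\<gamma>\<in>H. {x \<in> rat_dual. rho \<gamma> x \<in> U})"
    using g(1) by blast
  with U g(2) show False
    by blast
qed

theorem mainTheorem18:
  shows "expansive {q::rat. q > 0} rho rat_dual (\<lambda>_. 1) \<and>
         (\<forall>\<Gamma>0. fg_pos_rat_subgroup \<Gamma>0 \<longrightarrow> \<not> expansive \<Gamma>0 rho rat_dual (\<lambda>_. 1))"
  using expansive_pos_rats not_expansive_fg_pos_rat_subgroup by blast

end
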